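(* For every $d\geq 1$, $m(\ell_2^d)=d+1$, where $\ell_2^d$ is $\mathbb{R}^d$ with the Euclidean norm.
   Context: For a set $S$ in a normed space, its midpoint set is $M(S)=\{\tfrac12(x+y): x,y\in S,\ x\neq y\}$. A set $S$ is an M-set if every vector in $M(S)$ has norm exactly $1$ and every vector in $S$ has norm strictly greater than $1$. $m(X)$ denotes the largest cardinality of an M-set in the normed space $X$ if such a largest finite cardinality exists, and $m(X)=\infty$ otherwise. *)

theory Defs
  imports "HOL-Analysis.Analysis" "HOL-Library.Extended_Nat"
begin

definition midpoint_set :: "'a::real_normed_vector set \<Rightarrow> 'a set" where
  "midpoint_set S = {(1/2) *\<^sub>R (x + y) | x y. x \<in> S \<and> y \<in> S \<and> x \<noteq> y}"

definition M_set :: "'a::real_normed_vector set \<Rightarrow> bool" where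
  "M_set S \<longleftrightarrow> (\<forall>v\<in>midpoint_set S. norm v = 1) \<and> (\<forall>x\<in>S. norm x > 1)"

text \<open>A largest finite cardinality exists iff all M-sets are finite with
  uniformly bounded cardinality (the empty set is always an M-set).\<close>
definition m_space :: "'a::real_normed_vector itself \<Rightarrow> enat" where
  "m_space (_::'a itself) =
     (if \<exists>N::nat. \<forall>S::'a set. M_set S \<longrightarrow> finite S \<and> card S \<le> N
      then enat (Max {card S | S::'a set. M_set S})
      else \<infinity>)"

end

theory Submission
  imports Defs
begin

text \<open>
  In an inner product space the midpoint condition \<open>\<parallel>x + y\<parallel> = 2\<close> fixes
  every inner product: \<open>\<langle>x, y\<rangle> = 2 - (\<parallel>x\<parallel>\<^sup>2 + \<parallel>y\<parallel>\<^sup>2)/2\<close> for \<open>x \<noteq> y\<close>.  Hence for an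
  affine dependence \<open>\<Sum> U z = 0\<close> the Gram expansion collapses to
  \<open>\<parallel>\<Sum> U z z\<parallel>\<^sup>2 = \<Sum> U z\<^sup>2 (2\<parallel>z\<parallel>\<^sup>2 - 2)\<close>, which is positive because all points have norm
  \<open>> 1\<close>.  So M-sets are affinely independent and have at most \<open>n + 1\<close> points.

  The \<open>n\<close> vectors \<open>\<surd>2 b\<close> (\<open>b\<close> in the basis) together with a suitable point
  \<open>c (1,\<dots>,1)\<close> on the diagonal form an M-set with \<open>n + 1\<close> points.
\<close>

lemma M_set_iff:
  fixes S :: "'a::real_normed_vector set"
  shows "M_set S \<longleftrightarrow>
    (\<forall>x\<in>S. \<forall>y\<in>S. x \<noteq> y \<longrightarrow> norm (x + y) = 2) \<and> (\<forall>x\<in>S. norm x > 1)"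
proof -
  have half: "norm ((1/2) *\<^sub>R (x + y)) = 1 \<longleftrightarrow> norm (x + y) = 2" for x y :: 'a
    by auto
  show ?thesis
    unfolding M_set_def midpoint_set_def half[symmetric] by blast
qed

lemma M_set_subset: "M_set S \<Longrightarrow> T \<subseteq> S \<Longrightarrow> M_set T"
  unfolding M_set_iff by blast

lemma norm_add_square:
  fixes x y :: "'a::real_inner"
  shows "norm (x + y) ^ 2 = norm x ^ 2 + norm y ^ 2 + 2 * inner x y"
  by (simp add: dot_norm field_simps)

text \<open>Norm conditions are checked on squares, where inner products can be used.\<close>
lemma norm_eq_two_iff: "norm x = 2 \<longleftrightarrow> norm x ^ 2 = 4"
  using power2_eq_iff_nonneg[of "norm x" 2] by simp

text \<open>In an M-set all inner products are determined by the norms (uniformly for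
  \<open>x = y\<close> and \<open>x \<noteq> y\<close>, as needed for the Gram expansion below).\<close>
lemma M_set_inner:
  fixes S :: "'a::real_inner set"
  assumes M: "M_set S" and xy: "x \<in> S" "y \<in> S"
  shows "inner x y = 2 - (norm x ^ 2 + norm y ^ 2) / 2
           + (if x = y then 2 * norm x ^ 2 - 2 else 0)"
proof (cases "x = y")
  case True
  then show ?thesis by (simp add: dot_square_norm)
next
  case False
  then have "norm (x + y) ^ 2 = 4" using M xy unfolding M_set_iff by simp
  then show ?thesis using False by (simp add: dot_norm field_simps)
qed

lemma M_set_affine_combination_norm:
  fixes S :: "'a::real_inner set"
  assumes M: "M_set S" and fin: "finite S" and U: "sum U S = 0"
  shows "norm (\<Sum>z\<in>S. U z *\<^sub>R z) ^ 2 = (\<Sum>z\<in>S. (U z)\<^sup>2 * (2 * norm z ^ 2 - 2))"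
proof -
  define V where "V = (\<Sum>w\<in>S. U w *\<^sub>R w)"
  define K where "K = (\<Sum>w\<in>S. U w * norm w ^ 2)"
  have inner_V: "inner z V = U z * (2 * norm z ^ 2 - 2) - K / 2" if z: "z \<in> S" for z
  proof -
    have "inner z V = (\<Sum>w\<in>S. U w * inner z w)"
      unfolding V_def by (simp add: inner_sum_right)
    also have "\<dots> = (\<Sum>w\<in>S. (2 - norm z ^ 2 / 2) * U w - U w * norm w ^ 2 / 2
                          + (if w = z then U z * (2 * norm z ^ 2 - 2) else 0))"
    proof (rule sum.cong[OF refl])
      fix w assume w: "w \<in> S"
      note ip = M_set_inner[OF M z w]
      show "U w * inner z w = (2 - norm z ^ 2 / 2) * U w - U w * norm w ^ 2 / 2
                   + (if w = z then U z * (2 * norm z ^ 2 - 2) else 0)"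
        unfolding ip by (cases "w = z") (simp_all add: algebra_simps)
    qed
    also have "\<dots> = (2 - norm z ^ 2 / 2) * sum U S - K / 2 + U z * (2 * norm z ^ 2 - 2)"
      unfolding K_def using z fin
      by (simp add: sum.distrib sum_subtractf sum_distrib_left sum_divide_distrib)
    finally show ?thesis using U by simp
  qed
  have "norm V ^ 2 = (\<Sum>z\<in>S. U z * inner z V)"
    unfolding power2_norm_eq_inner by (simp add: V_def inner_sum_left)
  also have "\<dots> = (\<Sum>z\<in>S. (U z)\<^sup>2 * (2 * norm z ^ 2 - 2)) - K / 2 * sum U S"
    by (simp add: inner_V power2_eq_square algebra_simps sum_subtractf sum_distrib_left
                  sum.distrib sum_divide_distrib)
  finally show ?thesis using U unfolding V_def by simp
qed

lemma M_set_affine_independent: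
  fixes S :: "'a::real_inner set"
  assumes M: "M_set S" and fin: "finite S"
  shows "\<not> affine_dependent S"
proof
  assume "affine_dependent S"
  then obtain U v where U: "sum U S = 0" "(\<Sum>z\<in>S. U z *\<^sub>R z) = 0"
    and v: "v \<in> S" "U v \<noteq> 0"
    unfolding affine_dependent_explicit_finite[OF fin] by blast
  define f where "f z = (U z)\<^sup>2 * (2 * norm z ^ 2 - 2)" for z
  have big: "norm z ^ 2 > 1" if "z \<in> S" for z
    using M that unfolding M_set_iff by (simp add: one_less_power)
  have "(\<Sum>z\<in>S. f z) = 0"
    using M_set_affine_combination_norm[OF M fin U(1)] U(2) unfolding f_def by simp
  moreover have "\<forall>z\<in>S. f z \<ge> 0"
    using big unfolding f_def by (simp add: less_imp_le)
  ultimately have "f v = 0"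
    using sum_nonneg_eq_0_iff[OF fin] v(1) by blast
  moreover have "f v > 0"
    using big[OF v(1)] v(2) unfolding f_def by simp
  ultimately show False by simp
qed

lemma M_set_finite_card_le:
  fixes S :: "'a::euclidean_space set"
  assumes M: "M_set S"
  shows "finite S \<and> card S \<le> DIM('a) + 1"
proof -
  have small: "card T \<le> DIM('a) + 1" if "T \<subseteq> S" "finite T" for T
  proof (rule ccontr)
    assume "\<not> card T \<le> DIM('a) + 1"
    then have "affine_dependent T"
      using affine_dependent_biggerset[OF that(2)] by simp
    with M_set_affine_independent[OF M_set_subset[OF M that(1)] that(2)] show False ..
  qed
  have "finite S"
  proof (rule ccontr)
    assume "infinite S"
    then obtain T where T: "T \<subseteq> S" "finite T" "card T = DIM('a) + 2"
      using infinite_arbitrarily_large by blast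
    show False using small[OF T(1,2)] T(3) by simp
  qed
  with small show ?thesis by blast
qed

definition diagonal_simplex :: "real \<Rightarrow> 'a::euclidean_space set" where
  "diagonal_simplex c = insert (c *\<^sub>R \<Sum>Basis) ((\<lambda>b. sqrt 2 *\<^sub>R b) ` Basis)"

text \<open>The diagonal point must satisfy \<open>n c\<^sup>2 + 2\<surd>2 c = 2\<close>; its negative root is the one used.\<close>
lemma diagonal_root_exists:
  fixes n :: real
  assumes n: "n \<ge> 1"
  shows "\<exists>c<0. n * c\<^sup>2 + 2 * sqrt 2 * c = 2"
proof -
  define s where "s = sqrt 2"
  define t where "t = sqrt (2 + 2 * n)"
  have s: "s > 0" "s\<^sup>2 = 2" unfolding s_def by simp_all
  have t: "t \<ge> 0" "t\<^sup>2 = 2 + 2 * n" unfolding t_def using n by simp_all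
  define c where "c = - (s + t) / n"
  have "c < 0" unfolding c_def using n s t by (simp add: divide_neg_pos)
  moreover have "n * c\<^sup>2 + 2 * s * c = 2"
  proof -
    have "n * c\<^sup>2 + 2 * s * c = ((s + t)\<^sup>2 - 2 * s * (s + t)) / n"
      unfolding c_def using n by (simp add: field_simps power2_eq_square)
    also have "\<dots> = (t\<^sup>2 - s\<^sup>2) / n" by (simp add: power2_eq_square algebra_simps)
    also have "\<dots> = 2" using n s t by simp
    finally show ?thesis .
  qed
  ultimately show ?thesis unfolding s_def by blast
qed

lemma inner_sum_Basis_self: "inner (\<Sum>Basis) (\<Sum>Basis :: 'a::euclidean_space) = DIM('a)"
  by (simp add: inner_sum_right)

lemma diagonal_simplex_M_set:
  fixes c :: real
  assumes c: "c < 0" and root: "DIM('a) * c\<^sup>2 + 2 * sqrt 2 * c = 2"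
  shows "M_set (diagonal_simplex c :: 'a::euclidean_space set)"
proof -
  define s where "s = sqrt 2"
  define u :: 'a where "u = c *\<^sub>R \<Sum>Basis"
  have s: "s > 0" "s\<^sup>2 = 2" unfolding s_def by simp_all
  have norm_u: "norm u ^ 2 = DIM('a) * c\<^sup>2"
    unfolding u_def power2_norm_eq_inner by (simp add: inner_sum_Basis_self power2_eq_square)
  have norm_b: "norm (s *\<^sub>R b) ^ 2 = 2" if "b \<in> Basis" for b :: 'a
    using that s by (simp add: power_mult_distrib)
  have basis_basis: "norm (s *\<^sub>R b + s *\<^sub>R b') = 2"
    if "b \<in> Basis" "b' \<in> Basis" "b \<noteq> b'" for b b' :: 'a
    using that s by (simp add: norm_eq_two_iff norm_add_square norm_b inner_Basis)
  have basis_u: "norm (s *\<^sub>R b + u) = 2" if "b \<in> Basis" for b :: 'a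
  proof -
    have "inner b u = c"
      using that unfolding u_def by (simp add: inner_commute[of b])
    then show ?thesis
      using that s root unfolding s_def[symmetric]
      by (simp add: norm_eq_two_iff norm_add_square norm_b norm_u)
  qed
  have norm_big: "norm x ^ 2 > 1" if x: "x \<in> diagonal_simplex c" for x :: 'a
  proof (cases "x = u")
    case True
    have "s * c < 0" using s c by (simp add: mult_pos_neg)
    then show ?thesis unfolding True norm_u using root unfolding s_def[symmetric] by linarith
  next
    case False
    then obtain b where "b \<in> Basis" "x = s *\<^sub>R b"
      using x unfolding diagonal_simplex_def u_def s_def by blast
    then show ?thesis using norm_b by simp
  qed
  show ?thesis
    unfolding M_set_iff
  proof (intro conjI ballI impI)
    fix x y :: 'a assume xy: "x \<in> diagonal_simplex c" "y \<in> diagonal_simplex c" "x \<noteq> y"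
    then consider
        (basis_basis) b b' where "b \<in> Basis" "b' \<in> Basis" "x = s *\<^sub>R b" "y = s *\<^sub>R b'"
      | (basis_u) b where "b \<in> Basis" "x = s *\<^sub>R b" "y = u"
      | (u_basis) b where "b \<in> Basis" "x = u" "y = s *\<^sub>R b"
      unfolding diagonal_simplex_def u_def s_def by blast
    then show "norm (x + y) = 2"
      by cases (use basis_basis basis_u xy(3) in \<open>auto simp: add.commute\<close>)
  next
    fix x :: 'a assume "x \<in> diagonal_simplex c"
    then show "norm x > 1"
      using norm_big power_less_imp_less_base[of 1 2 "norm x"] by simp
  qed
qed

text \<open>For \<open>c < 0\<close> the diagonal point differs from all scaled basis vectors, so the diagonal
  simplex has exactly \<open>DIM('a) + 1\<close> points.\<close>
lemma card_diagonal_simplex: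
  fixes c :: real
  assumes c: "c < 0"
  shows "card (diagonal_simplex c :: 'a::euclidean_space set) = DIM('a) + 1"
proof -
  have inj: "inj_on (\<lambda>b::'a. sqrt 2 *\<^sub>R b) Basis" by (simp add: inj_on_def)
  have notin: "c *\<^sub>R \<Sum>Basis \<notin> (\<lambda>b::'a. sqrt 2 *\<^sub>R b) ` Basis"
  proof
    assume "c *\<^sub>R \<Sum>Basis \<in> (\<lambda>b::'a. sqrt 2 *\<^sub>R b) ` Basis"
    then obtain b :: 'a where b: "b \<in> Basis" "c *\<^sub>R \<Sum>Basis = sqrt 2 *\<^sub>R b" by blast
    then have "inner (c *\<^sub>R \<Sum>Basis) b = sqrt 2" by simp
    moreover have "inner (c *\<^sub>R \<Sum>Basis) b = c" using b(1) by simp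
    moreover have "sqrt 2 > 0" by simp
    ultimately show False using c by linarith
  qed
  show ?thesis
    unfolding diagonal_simplex_def using card_image[OF inj] notin by simp
qed

lemma M_set_exists:
  "\<exists>S::'a::euclidean_space set. M_set S \<and> card S = DIM('a) + 1"
proof -
  obtain c where "c < 0" "real DIM('a) * c\<^sup>2 + 2 * sqrt 2 * c = 2"
    using diagonal_root_exists[of "real DIM('a)"] by (auto simp: Suc_le_eq)
  then show ?thesis
    using diagonal_simplex_M_set card_diagonal_simplex by blast
qed

lemma m_space_eqI:
  fixes S0 :: "'a::real_normed_vector set"
  assumes bound: "\<And>S::'a set. M_set S \<Longrightarrow> finite S \<and> card S \<le> N"
    and S0: "M_set S0" "card S0 = N"
  shows "m_space TYPE('a) = enat N"
proof -
  have "Max {card S | S::'a set. M_set S} = N"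
  proof (rule Max_eqI)
    show "finite {card S | S::'a set. M_set S}"
      by (rule finite_subset[of _ "{..N}"]) (auto dest: bound)
  qed (use bound S0 in auto)
  then show ?thesis unfolding m_space_def using bound by auto
qed

theorem m_space_euclidean: "m_space TYPE('a::euclidean_space) = enat (DIM('a) + 1)"
proof -
  obtain S0 :: "'a set" where "M_set S0" "card S0 = DIM('a) + 1"
    using M_set_exists by blast
  then show ?thesis using M_set_finite_card_le by (intro m_space_eqI) auto
qed

theorem theorem6:
  shows "m_space TYPE(real ^ 'd) = enat (CARD('d) + 1)"
  using m_space_euclidean[where 'a = "real ^ 'd"] by simp

end
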